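(* Let $F$ be a heavy-tailed distribution on $[0,\infty)$. If for some $c\in(0,\infty)$ $$\int_0^x\overline{F}(x-y)\overline{F}(y)\,dy\sim c\,\overline{F}(x)\quad\text{as }x\to\infty,$$ then $F$ has a finite mean $a$ and $F\in\mathcal S^*$, i.e. $\int_0^x\overline{F}(x-y)\overline{F}(y)\,dy\sim 2a\overline{F}(x)$ as $x\to\infty$.
   Context: $\overline{F}(x)=F(x,\infty)$, assumed positive for all $x$. $F$ is heavy-tailed if $\int_0^\infty e^{\gamma x}F(dx)=\infty$ for every $\gamma>0$. A distribution $F$ on $[0,\infty)$ with finite mean $a$ belongs to the class $\mathcal S^*$ if $\int_0^x\overline{F}(x-y)\overline{F}(y)\,dy\sim 2a\overline{F}(x)$ as $x\to\infty$. *)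

theory Defs
  imports "HOL-Probability.Probability" "HOL-Library.Landau_Symbols"
begin

definition tail :: "real measure \<Rightarrow> real \<Rightarrow> real" where
  "tail M x = measure M {x<..}"

definition distribution_on_nonneg :: "real measure \<Rightarrow> bool" where
  "distribution_on_nonneg M \<longleftrightarrow> prob_space M \<and> sets M = sets borel \<and> measure M {0..} = 1"

definition heavy_tailed :: "real measure \<Rightarrow> bool" where
  "heavy_tailed M \<longleftrightarrow> (\<forall>\<gamma>>0. (\<integral>\<^sup>+ x. ennreal (exp (\<gamma> * x)) \<partial>M) = \<infinity>)"

definition tail_conv :: "real measure \<Rightarrow> real \<Rightarrow> real" where
  "tail_conv M x = integral {0..x} (\<lambda>y. tail M (x - y) * tail M y)"

end

theory Submission
  imports Defs
begin

text \<open>Write f for the tail of F cut off at 0 and I = f * f for its self-convolution, so that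
  I(x) = tail_conv M x for x \<ge> 0. Since I(x) \<ge> f(x) \<integral>[0,x] f, the hypothesis I \<sim> c f bounds the
  partial integrals of f, hence the mean a = \<integral> f is finite.

  Fix e > 0 and x0 beyond which (c - e) f \<le> I \<le> (c + e) f, and put k = \<integral>[0,x0] I and
  p = \<integral>[0,x0] f. Tonelli gives \<integral> I = a^2, hence a^2 \<le> k + (c + e)(a - p). For g > 0 the weight
  exp(g x) is multiplicative, so G(t) = \<integral>[0,t] exp(g x) f(x) dx satisfies
  \<integral>[0,t] exp(g x) I(x) dx \<le> G(t)^2, hence k + (c - e)(G(t) - G(x0)) \<le> G(t)^2. Heavy tails make the
  continuous function G unbounded, so it takes every value v \<ge> G(x0); letting g \<rightarrow> 0 gives
  k + (c - e)(v - p) \<le> v^2 for all v > p. Evaluating both quadratic bounds near v = a yields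
  |c - 2a| \<le> 3e + (a - p), and x0 \<rightarrow> \<infinity>, e \<rightarrow> 0 give c = 2a.\<close>

lemma
  fixes h :: "real \<Rightarrow> real"
  assumes [measurable]: "h \<in> borel_measurable borel"
    and nonneg: "\<And>x. x \<in> {a..b} \<Longrightarrow> 0 \<le> h x" and bounded: "\<And>x. x \<in> {a..b} \<Longrightarrow> h x \<le> B"
  shows integrable_on_Icc_if_bounded: "h integrable_on {a..b}"
    and nn_integral_Icc_eq_integral:
      "(\<integral>\<^sup>+x. ennreal (indicator {a..b} x * h x) \<partial>lborel) = ennreal (integral {a..b} h)"
proof -
  have "emeasure lborel {a..b} < \<infinity>"
    by (cases "a \<le> b") auto
  then have "set_integrable lborel {a..b} h"
    unfolding set_integrable_def
    by (intro integrableI_bounded_set_indicator[where B=B]) (use nonneg bounded in auto)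
  then show integrable: "h integrable_on {a..b}"
    by (rule set_borel_integral_eq_integral(1))
  show "(\<integral>\<^sup>+x. ennreal (indicator {a..b} x * h x) \<partial>lborel) = ennreal (integral {a..b} h)"
    using nn_integral_has_integral_lebesgue[OF nonneg integrable_integral[OF integrable]] by simp
qed

lemma nn_integral_Ico_exp:
  assumes "0 \<le> g"
  shows "(\<integral>\<^sup>+t. indicator {0..<x} t * ennreal (g * exp (g * t)) \<partial>lborel) = ennreal (exp (g * x) - 1)"
proof (cases "0 \<le> x")
  case True
  have "((\<lambda>t. g * exp (g * t)) has_integral (exp (g * x) - exp (g * 0))) {0..x}"
    by (intro fundamental_theorem_of_calculus True)
       (auto intro!: derivative_eq_intros simp: has_real_derivative_iff_has_vector_derivative[symmetric])
  then have "(\<integral>\<^sup>+t. ennreal (indicator {0..x} t * (g * exp (g * t))) \<partial>lborel) = ennreal (exp (g * x) - 1)"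
    by (intro nn_integral_has_integral_lebesgue) (use assms in auto)
  moreover have "(\<integral>\<^sup>+t. indicator {0..<x} t * ennreal (g * exp (g * t)) \<partial>lborel)
      = (\<integral>\<^sup>+t. ennreal (indicator {0..x} t * (g * exp (g * t))) \<partial>lborel)"
    by (intro nn_integral_cong_AE, use AE_lborel_singleton[of x] in eventually_elim)
       (auto split: split_indicator)
  ultimately show ?thesis by simp
next
  case False
  then show ?thesis
    using assms by (simp add: ennreal_neg mult_nonneg_nonpos)
qed

lemma tendsto_nn_integral_indicator_atMost:
  fixes u :: "real \<Rightarrow> ennreal"
  assumes [measurable]: "u \<in> borel_measurable borel"
  shows "((\<lambda>t. \<integral>\<^sup>+x. indicator {..t} x * u x \<partial>lborel) \<longlongrightarrow> (\<integral>\<^sup>+x. u x \<partial>lborel)) at_top"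
proof (rule order_tendstoI)
  have incr: "(\<integral>\<^sup>+x. indicator {..s} x * u x \<partial>lborel) \<le> (\<integral>\<^sup>+x. indicator {..t} x * u x \<partial>lborel)"
    if "s \<le> t" for s t
    by (intro nn_integral_mono) (use that in \<open>simp split: split_indicator\<close>)
  have pointwise: "(SUP n::nat. indicator {..real n} x * u x) = u x" for x
  proof (rule antisym)
    show "(SUP n::nat. indicator {..real n} x * u x) \<le> u x"
      by (rule SUP_least) (simp split: split_indicator)
    obtain n :: nat where "x \<le> real n"
      using real_arch_simple by blast
    then have "u x = indicator {..real n} x * u x"
      by simp
    also have "\<dots> \<le> (SUP n::nat. indicator {..real n} x * u x)"
      by (rule SUP_upper) simp
    finally show "u x \<le> (SUP n::nat. indicator {..real n} x * u x)" .
  qed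
  have "(\<integral>\<^sup>+x. u x \<partial>lborel) = (\<integral>\<^sup>+x. (SUP n::nat. indicator {..real n} x * u x) \<partial>lborel)"
    by (simp add: pointwise)
  also have "\<dots> = (SUP n::nat. \<integral>\<^sup>+x. indicator {..real n} x * u x \<partial>lborel)"
    by (rule nn_integral_monotone_convergence_SUP)
       (auto simp: incseq_def le_fun_def split: split_indicator)
  finally have sup: "(\<integral>\<^sup>+x. u x \<partial>lborel) = (SUP n::nat. \<integral>\<^sup>+x. indicator {..real n} x * u x \<partial>lborel)" .
  fix y assume "y < (\<integral>\<^sup>+x. u x \<partial>lborel)"
  then have "y < (SUP n::nat. \<integral>\<^sup>+x. indicator {..real n} x * u x \<partial>lborel)"
    by (simp only: sup)
  then obtain n :: nat where n: "y < (\<integral>\<^sup>+x. indicator {..real n} x * u x \<partial>lborel)"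
    unfolding less_SUP_iff by blast
  show "\<forall>\<^sub>F t in at_top. y < (\<integral>\<^sup>+x. indicator {..t} x * u x \<partial>lborel)"
    using eventually_ge_at_top[of "real n"] by eventually_elim (rule less_le_trans[OF n incr])
next
  have le: "(\<integral>\<^sup>+x. indicator {..t} x * u x \<partial>lborel) \<le> (\<integral>\<^sup>+x. u x \<partial>lborel)" for t
    by (intro nn_integral_mono) (simp split: split_indicator)
  fix y assume "(\<integral>\<^sup>+x. u x \<partial>lborel) < y"
  then show "\<forall>\<^sub>F t in at_top. (\<integral>\<^sup>+x. indicator {..t} x * u x \<partial>lborel) < y"
    by (intro always_eventually allI le_less_trans[OF le])
qed

section \<open>Convolution of nonnegative functions on the real line\<close>

definition nn_conv :: "(real \<Rightarrow> ennreal) \<Rightarrow> (real \<Rightarrow> ennreal) \<Rightarrow> real \<Rightarrow> ennreal" where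
  "nn_conv f g x = (\<integral>\<^sup>+y. f (x - y) * g y \<partial>lborel)"

lemma borel_measurable_nn_conv [measurable]:
  assumes [measurable]: "f \<in> borel_measurable borel" "g \<in> borel_measurable borel"
  shows "nn_conv f g \<in> borel_measurable borel"
  unfolding nn_conv_def by measurable

lemma nn_conv_eq_0_if_neg:
  assumes "\<And>y. y < 0 \<Longrightarrow> f y = 0" "\<And>y. y < 0 \<Longrightarrow> g y = 0" "x < 0"
  shows "nn_conv f g x = 0"
proof -
  have "f (x - y) * g y = 0" for y
  proof (cases "y < 0")
    case False
    then show ?thesis
      using assms(1)[of "x - y"] \<open>x < 0\<close> by simp
  qed (simp add: assms(2))
  then show ?thesis
    by (simp add: nn_conv_def del: mult_eq_0_iff)
qed

lemma nn_integral_mult_nn_conv: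
  assumes [measurable]: "h \<in> borel_measurable borel" "f \<in> borel_measurable borel"
    "g \<in> borel_measurable borel"
  shows "(\<integral>\<^sup>+x. h x * nn_conv f g x \<partial>lborel)
    = (\<integral>\<^sup>+y. g y * (\<integral>\<^sup>+z. h (z + y) * f z \<partial>lborel) \<partial>lborel)"
proof -
  have "(\<integral>\<^sup>+x. h x * nn_conv f g x \<partial>lborel)
      = (\<integral>\<^sup>+x. (\<integral>\<^sup>+y. h x * (f (x - y) * g y) \<partial>lborel) \<partial>lborel)"
    unfolding nn_conv_def by (intro nn_integral_cong nn_integral_cmult[symmetric]) simp
  also have "\<dots> = (\<integral>\<^sup>+y. (\<integral>\<^sup>+x. h x * (f (x - y) * g y) \<partial>lborel) \<partial>lborel)"
    by (intro lborel_pair.Fubini'[symmetric]) simp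
  also have "\<dots> = (\<integral>\<^sup>+y. g y * (\<integral>\<^sup>+x. h x * f (x - y) \<partial>lborel) \<partial>lborel)"
    by (intro nn_integral_cong) (subst nn_integral_cmult[symmetric], auto simp: ac_simps)
  also have "\<dots> = (\<integral>\<^sup>+y. g y * (\<integral>\<^sup>+z. h (z + y) * f z \<partial>lborel) \<partial>lborel)"
  proof -
    have "(\<integral>\<^sup>+x. h x * f (x - y) \<partial>lborel) = (\<integral>\<^sup>+z. h (z + y) * f z \<partial>lborel)" for y
      by (subst nn_integral_real_affine[where c=1 and t=y]) (auto simp: add.commute)
    then show ?thesis
      by simp
  qed
  finally show ?thesis .
qed

lemma nn_integral_nn_conv:
  assumes [measurable]: "f \<in> borel_measurable borel" "g \<in> borel_measurable borel"
  shows "(\<integral>\<^sup>+x. nn_conv f g x \<partial>lborel) = (\<integral>\<^sup>+x. f x \<partial>lborel) * (\<integral>\<^sup>+x. g x \<partial>lborel)"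
  using nn_integral_mult_nn_conv[of "\<lambda>_. 1" f g] by (simp add: nn_integral_multc mult.commute)

lemma nn_integral_submultiplicative_nn_conv_le:
  assumes [measurable]: "h \<in> borel_measurable borel" "f \<in> borel_measurable borel"
    "g \<in> borel_measurable borel"
    and f_support: "\<And>y. y < 0 \<Longrightarrow> f y = 0" and g_support: "\<And>y. y < 0 \<Longrightarrow> g y = 0"
    and submult: "\<And>y z. 0 \<le> y \<Longrightarrow> 0 \<le> z \<Longrightarrow> h (y + z) \<le> h y * h z"
  shows "(\<integral>\<^sup>+x. h x * nn_conv f g x \<partial>lborel)
    \<le> (\<integral>\<^sup>+x. h x * f x \<partial>lborel) * (\<integral>\<^sup>+x. h x * g x \<partial>lborel)"
proof -
  have "g y * (\<integral>\<^sup>+z. h (z + y) * f z \<partial>lborel) \<le> h y * g y * (\<integral>\<^sup>+z. h z * f z \<partial>lborel)" for y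
  proof (cases "y < 0")
    case False
    have "(\<integral>\<^sup>+z. h (z + y) * f z \<partial>lborel) \<le> (\<integral>\<^sup>+z. h y * (h z * f z) \<partial>lborel)"
    proof (rule nn_integral_mono)
      fix z
      show "h (z + y) * f z \<le> h y * (h z * f z)"
      proof (cases "z < 0")
        case False
        then have "h (z + y) \<le> h y * h z"
          using \<open>\<not> y < 0\<close> submult[of y z] by (simp add: add.commute)
        then show ?thesis
          using mult_right_mono[of "h (z + y)" "h y * h z" "f z"] by (simp add: mult.assoc)
      qed (simp add: f_support)
    qed
    also have "\<dots> = h y * (\<integral>\<^sup>+z. h z * f z \<partial>lborel)"
      by (rule nn_integral_cmult) simp
    finally have "g y * (\<integral>\<^sup>+z. h (z + y) * f z \<partial>lborel) \<le> g y * (h y * (\<integral>\<^sup>+z. h z * f z \<partial>lborel))"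
      by (rule mult_left_mono) simp
    then show ?thesis
      by (simp add: ac_simps)
  qed (simp add: g_support)
  then have "(\<integral>\<^sup>+x. h x * nn_conv f g x \<partial>lborel)
      \<le> (\<integral>\<^sup>+y. h y * g y * (\<integral>\<^sup>+z. h z * f z \<partial>lborel) \<partial>lborel)"
    unfolding nn_integral_mult_nn_conv[OF assms(1-3)] by (intro nn_integral_mono)
  also have "\<dots> = (\<integral>\<^sup>+x. h x * g x \<partial>lborel) * (\<integral>\<^sup>+x. h x * f x \<partial>lborel)"
    by (rule nn_integral_multc) simp
  finally show ?thesis
    by (simp add: mult.commute)
qed

lemma nn_integral_square_le_of_nn_conv_le:
  fixes f :: "real \<Rightarrow> ennreal"
  assumes [measurable]: "f \<in> borel_measurable borel"
    and upper: "\<And>x. x0 < x \<Longrightarrow> nn_conv f f x \<le> C * f x"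
  shows "(\<integral>\<^sup>+x. f x \<partial>lborel)\<^sup>2 + C * (\<integral>\<^sup>+x. indicator {..x0} x * f x \<partial>lborel)
    \<le> (\<integral>\<^sup>+x. indicator {..x0} x * nn_conv f f x \<partial>lborel) + C * (\<integral>\<^sup>+x. f x \<partial>lborel)"
proof -
  have "(\<integral>\<^sup>+x. f x \<partial>lborel)\<^sup>2 + C * (\<integral>\<^sup>+x. indicator {..x0} x * f x \<partial>lborel)
      = (\<integral>\<^sup>+x. nn_conv f f x + C * (indicator {..x0} x * f x) \<partial>lborel)"
    by (subst nn_integral_add) (auto simp: nn_integral_cmult nn_integral_nn_conv power2_eq_square)
  also have "\<dots> \<le> (\<integral>\<^sup>+x. indicator {..x0} x * nn_conv f f x + C * f x \<partial>lborel)"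
  proof (rule nn_integral_mono)
    fix x
    show "nn_conv f f x + C * (indicator {..x0} x * f x) \<le> indicator {..x0} x * nn_conv f f x + C * f x"
      using upper[of x] by (cases "x \<le> x0") auto
  qed
  also have "\<dots> = (\<integral>\<^sup>+x. indicator {..x0} x * nn_conv f f x \<partial>lborel) + C * (\<integral>\<^sup>+x. f x \<partial>lborel)"
    by (subst nn_integral_add) (auto simp: nn_integral_cmult)
  finally show ?thesis .
qed

lemma nn_integral_exp_weighted_le_of_le_nn_conv:
  fixes f :: "real \<Rightarrow> ennreal"
  assumes [measurable]: "f \<in> borel_measurable borel"
    and support: "\<And>x. x < 0 \<Longrightarrow> f x = 0" and "0 \<le> g" and "x0 \<le> t"
    and lower: "\<And>x. x0 < x \<Longrightarrow> x \<le> t \<Longrightarrow> C * f x \<le> nn_conv f f x"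
  defines "G \<equiv> \<lambda>s. \<integral>\<^sup>+x. indicator {..s} x * (ennreal (exp (g * x)) * f x) \<partial>lborel"
  shows "(\<integral>\<^sup>+x. indicator {..x0} x * nn_conv f f x \<partial>lborel) + C * G t \<le> (G t)\<^sup>2 + C * G x0"
proof -
  define w where "w x = indicator {..t} x * ennreal (exp (g * x))" for x
  have [measurable]: "w \<in> borel_measurable borel"
    unfolding w_def[abs_def] by measurable
  have w_submult: "w (y + z) \<le> w y * w z" if "0 \<le> y" "0 \<le> z" for y z
    using that by (auto simp: w_def distrib_left exp_add ennreal_mult split: split_indicator)
  have weighted_conv: "(\<integral>\<^sup>+x. w x * nn_conv f f x \<partial>lborel) \<le> (G t)\<^sup>2"
    using nn_integral_submultiplicative_nn_conv_le[of w f f] w_submult support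
    by (simp add: G_def w_def power2_eq_square mult.assoc)
  have pointwise: "indicator {..x0} x * nn_conv f f x + C * (indicator {..t} x * (ennreal (exp (g * x)) * f x))
      \<le> w x * nn_conv f f x + C * (indicator {..x0} x * (ennreal (exp (g * x)) * f x))" for x
  proof (cases "x \<le> x0")
    case True
    have "nn_conv f f x \<le> ennreal (exp (g * x)) * nn_conv f f x"
    proof (cases "x < 0")
      case False
      then have "ennreal 1 \<le> ennreal (exp (g * x))"
        using \<open>0 \<le> g\<close> by (intro ennreal_leI) simp
      then show ?thesis
        using mult_right_mono[of 1 "ennreal (exp (g * x))" "nn_conv f f x"] by simp
    qed (simp add: nn_conv_eq_0_if_neg support)
    then show ?thesis
      using True \<open>x0 \<le> t\<close> by (simp add: w_def)
  next
    case False
    show ?thesis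
    proof (cases "x \<le> t")
      case True
      have "C * (ennreal (exp (g * x)) * f x) = ennreal (exp (g * x)) * (C * f x)"
        by (simp add: ac_simps)
      also have "\<dots> \<le> ennreal (exp (g * x)) * nn_conv f f x"
        using lower False True by (intro mult_left_mono) auto
      finally show ?thesis
        using False True by (simp add: w_def)
    qed (use False in \<open>simp add: w_def\<close>)
  qed
  have "(\<integral>\<^sup>+x. indicator {..x0} x * nn_conv f f x \<partial>lborel) + C * G t
      = (\<integral>\<^sup>+x. indicator {..x0} x * nn_conv f f x
          + C * (indicator {..t} x * (ennreal (exp (g * x)) * f x)) \<partial>lborel)"
    unfolding G_def by (subst nn_integral_add) (auto simp: nn_integral_cmult)
  also have "\<dots> \<le> (\<integral>\<^sup>+x. w x * nn_conv f f x
      + C * (indicator {..x0} x * (ennreal (exp (g * x)) * f x)) \<partial>lborel)"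
    by (intro nn_integral_mono pointwise)
  also have "\<dots> = (\<integral>\<^sup>+x. w x * nn_conv f f x \<partial>lborel) + C * G x0"
    unfolding G_def by (subst nn_integral_add) (auto simp: nn_integral_cmult)
  also have "\<dots> \<le> (G t)\<^sup>2 + C * G x0"
    using weighted_conv by (rule add_right_mono)
  finally show ?thesis .
qed

lemma abs_diff_le_of_quadratic_bounds:
  fixes a p k c e :: real
  assumes upper: "a\<^sup>2 + (c + e) * p \<le> k + (c + e) * a"
    and lower: "\<And>v. p < v \<Longrightarrow> k + (c - e) * v \<le> v\<^sup>2 + (c - e) * p"
    and "p < a"
  shows "\<bar>c - 2 * a\<bar> \<le> 3 * e + (a - p)"
proof -
  define d where "d = a - p"
  txt \<open>Test the lower bound at v = a + d and at v = a - d/2; in each case d times one half of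
    the claim, moved to one side, is the sum of the two hypotheses moved to one side.\<close>
  have "0 < d"
    using \<open>p < a\<close> by (simp add: d_def)
  have "d * (c - 3 * e - 2 * a - d)
      = (k + (c - e) * (a + d) - ((a + d)\<^sup>2 + (c - e) * p)) + (a\<^sup>2 + (c + e) * p - (k + (c + e) * a))"
    unfolding d_def power2_eq_square by algebra
  moreover have "k + (c - e) * (a + d) \<le> (a + d)\<^sup>2 + (c - e) * p"
    using \<open>0 < d\<close> by (intro lower) (simp add: d_def)
  ultimately have "d * (c - 3 * e - 2 * a - d) \<le> 0"
    using upper by linarith
  then have above: "c - 2 * a \<le> 3 * e + d"
    using \<open>0 < d\<close> by (simp add: mult_le_0_iff)
  have "d * (a - c / 2 - 3 * e / 2 - d / 4)
      = (k + (c - e) * (a - d / 2) - ((a - d / 2)\<^sup>2 + (c - e) * p)) + (a\<^sup>2 + (c + e) * p - (k + (c + e) * a))"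
    unfolding d_def power2_eq_square by (simp add: field_simps)
  moreover have "k + (c - e) * (a - d / 2) \<le> (a - d / 2)\<^sup>2 + (c - e) * p"
    using \<open>0 < d\<close> by (intro lower) (simp add: d_def field_simps)
  ultimately have "d * (a - c / 2 - 3 * e / 2 - d / 4) \<le> 0"
    using upper by linarith
  then have below: "2 * a - c \<le> 3 * e + d"
    using \<open>0 < d\<close> by (simp add: mult_le_0_iff)
  show ?thesis
    using above below by (simp add: d_def abs_le_iff)
qed

section \<open>Tails of distributions on [0, \<infinity>)\<close>

text \<open>The tail as a density on the whole real line; the cut-off matters because tail M x = 1
  for x < 0.\<close>

definition etail :: "real measure \<Rightarrow> real \<Rightarrow> ennreal" where
  "etail M x = indicator {0..} x * ennreal (tail M x)"

definition weighted_tail_integral :: "real measure \<Rightarrow> real \<Rightarrow> real \<Rightarrow> real" where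
  "weighted_tail_integral M g t = integral {0..t} (\<lambda>x. exp (g * x) * tail M x)"

lemma tail_nonneg: "0 \<le> tail M x"
  by (simp add: tail_def)

context
  fixes M :: "real measure"
  assumes distr: "distribution_on_nonneg M"
begin

interpretation prob_space M
  using distr by (simp add: distribution_on_nonneg_def)

lemma distribution_on_nonneg_sets [measurable_cong]: "sets M = sets borel"
  using distr by (simp add: distribution_on_nonneg_def)

lemma tail_le_1: "tail M x \<le> 1"
  by (simp add: tail_def)

lemma tail_antimono: "x \<le> y \<Longrightarrow> tail M y \<le> tail M x"
  unfolding tail_def by (intro finite_measure_mono) auto

lemma borel_measurable_tail [measurable]: "tail M \<in> borel_measurable borel"
proof -
  have "mono (\<lambda>x. - tail M x)"
    by (auto simp: mono_def tail_antimono)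
  then have "(\<lambda>x. - (- tail M x)) \<in> borel_measurable borel"
    by (intro borel_measurable_uminus borel_measurable_mono)
  then show ?thesis
    by simp
qed

lemma borel_measurable_etail [measurable]: "etail M \<in> borel_measurable borel"
  unfolding etail_def[abs_def] by measurable

lemma nn_integral_layer_cake:
  assumes [measurable]: "k \<in> borel_measurable borel"
  shows "(\<integral>\<^sup>+x. (\<integral>\<^sup>+t. indicator {0..<x} t * k t \<partial>lborel) \<partial>M) = (\<integral>\<^sup>+t. k t * etail M t \<partial>lborel)"
proof -
  interpret pair_sigma_finite M lborel ..
  have "indicator {0..<x} t * k t = (if 0 \<le> t \<and> t < x then k t else 0)" for x t :: real
    by (simp split: split_indicator)
  then have "(\<integral>\<^sup>+x. (\<integral>\<^sup>+t. indicator {0..<x} t * k t \<partial>lborel) \<partial>M)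
      = (\<integral>\<^sup>+t. (\<integral>\<^sup>+x. (if 0 \<le> t \<and> t < x then k t else 0) \<partial>M) \<partial>lborel)"
    by (simp only:) (rule Fubini'[symmetric], measurable)
  also have "\<dots> = (\<integral>\<^sup>+t. k t * etail M t \<partial>lborel)"
  proof (rule nn_integral_cong)
    fix t :: real
    have "(\<integral>\<^sup>+x. (if 0 \<le> t \<and> t < x then k t else 0) \<partial>M)
        = (\<integral>\<^sup>+x. indicator {0..} t * k t * indicator {t<..} x \<partial>M)"
      by (intro nn_integral_cong) (simp split: split_indicator)
    also have "\<dots> = indicator {0..} t * k t * emeasure M {t<..}"
      by (rule nn_integral_cmult_indicator) simp
    also have "\<dots> = k t * etail M t"
      by (simp add: emeasure_eq_measure etail_def tail_def ac_simps)
    finally show "(\<integral>\<^sup>+x. (if 0 \<le> t \<and> t < x then k t else 0) \<partial>M) = k t * etail M t" .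
  qed
  finally show ?thesis .
qed

lemma nn_integral_id_eq_nn_integral_etail: "(\<integral>\<^sup>+x. ennreal x \<partial>M) = (\<integral>\<^sup>+t. etail M t \<partial>lborel)"
proof -
  have "ennreal x = (\<integral>\<^sup>+t. indicator {0..<x} t * 1 \<partial>lborel)" for x :: real
    by (cases "0 \<le> x") (auto simp: ennreal_neg)
  then show ?thesis
    using nn_integral_layer_cake[of "\<lambda>_. 1"] by simp
qed

lemma nn_integral_exp_etail_eq_infinity:
  assumes "heavy_tailed M" "0 < g"
  shows "(\<integral>\<^sup>+t. ennreal (exp (g * t)) * etail M t \<partial>lborel) = \<infinity>"
proof -
  have exp_le: "ennreal (exp (g * x)) \<le> 1 + ennreal (exp (g * x) - 1)" for x
  proof (cases "1 \<le> exp (g * x)")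
    case True
    then show ?thesis
      using ennreal_plus[of 1 "exp (g * x) - 1"] by simp
  qed (simp add: add_increasing2)
  have "\<infinity> = (\<integral>\<^sup>+x. ennreal (exp (g * x)) \<partial>M)"
    using assms by (simp add: heavy_tailed_def)
  also have "\<dots> \<le> (\<integral>\<^sup>+x. 1 + ennreal (exp (g * x) - 1) \<partial>M)"
    by (intro nn_integral_mono exp_le)
  also have "\<dots> = 1 + (\<integral>\<^sup>+x. ennreal (exp (g * x) - 1) \<partial>M)"
    by (subst nn_integral_add) (auto simp: emeasure_space_1)
  also have "(\<integral>\<^sup>+x. ennreal (exp (g * x) - 1) \<partial>M)
      = (\<integral>\<^sup>+x. (\<integral>\<^sup>+t. indicator {0..<x} t * ennreal (g * exp (g * t)) \<partial>lborel) \<partial>M)"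
    using assms(2) by (simp add: nn_integral_Ico_exp)
  also have "\<dots> = ennreal g * (\<integral>\<^sup>+t. ennreal (exp (g * t)) * etail M t \<partial>lborel)"
    using assms(2) by (simp add: nn_integral_layer_cake nn_integral_cmult ennreal_mult mult.assoc)
  finally show ?thesis
    using assms(2) by (auto simp: ennreal_mult_eq_top_iff top_unique)
qed

lemma has_bochner_integral_id:
  assumes "(\<integral>\<^sup>+x. etail M x \<partial>lborel) = ennreal a" "0 \<le> a"
  shows "has_bochner_integral M (\<lambda>x. x) a"
proof (rule has_bochner_integral_nn_integral)
  show "AE x in M. 0 \<le> x"
    using AE_prob_1[of "{0..}"] distr by (simp add: distribution_on_nonneg_def)
  show "(\<integral>\<^sup>+x. ennreal x \<partial>M) = ennreal a"
    using assms(1) by (simp add: nn_integral_id_eq_nn_integral_etail)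
qed (simp_all add: assms(2))

lemma ennreal_tail_conv: "ennreal (tail_conv M x) = nn_conv (etail M) (etail M) x"
proof -
  have "nn_conv (etail M) (etail M) x
      = (\<integral>\<^sup>+y. ennreal (indicator {0..x} y * (tail M (x - y) * tail M y)) \<partial>lborel)"
    unfolding nn_conv_def
    by (intro nn_integral_cong) (auto simp: etail_def ennreal_mult tail_nonneg split: split_indicator)
  also have "\<dots> = ennreal (tail_conv M x)"
    unfolding tail_conv_def
    by (rule nn_integral_Icc_eq_integral[where B=1]) (auto simp: tail_nonneg tail_le_1 mult_le_one)
  finally show ?thesis ..
qed

lemma tail_conv_nonneg: "0 \<le> tail_conv M x"
  unfolding tail_conv_def
  by (intro integral_nonneg integrable_on_Icc_if_bounded[where B=1])
     (auto simp: tail_nonneg tail_le_1 mult_le_one)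

lemma tail_mult_nn_integral_etail_le_tail_conv:
  "ennreal (tail M x) * (\<integral>\<^sup>+y. indicator {..x} y * etail M y \<partial>lborel) \<le> ennreal (tail_conv M x)"
proof -
  have "ennreal (tail M x) * (\<integral>\<^sup>+y. indicator {..x} y * etail M y \<partial>lborel)
      = (\<integral>\<^sup>+y. ennreal (tail M x) * (indicator {..x} y * etail M y) \<partial>lborel)"
    by (rule nn_integral_cmult[symmetric]) simp
  also have "\<dots> \<le> nn_conv (etail M) (etail M) x"
    unfolding nn_conv_def
  proof (rule nn_integral_mono)
    fix y
    show "ennreal (tail M x) * (indicator {..x} y * etail M y) \<le> etail M (x - y) * etail M y"
    proof (cases "0 \<le> y \<and> y \<le> x")
      case True
      then have "ennreal (tail M x) \<le> etail M (x - y)"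
        by (simp add: etail_def tail_antimono ennreal_leI)
      then show ?thesis
        using True by (simp add: mult_right_mono)
    qed (auto simp: etail_def)
  qed
  also have "\<dots> = ennreal (tail_conv M x)"
    by (simp add: ennreal_tail_conv)
  finally show ?thesis .
qed

lemma
  assumes "0 \<le> g"
  shows weighted_tail_integrable: "(\<lambda>x. exp (g * x) * tail M x) integrable_on {0..t}"
    and nn_integral_exp_etail_atMost:
      "(\<integral>\<^sup>+x. indicator {..t} x * (ennreal (exp (g * x)) * etail M x) \<partial>lborel)
        = ennreal (weighted_tail_integral M g t)"
proof -
  have bounded: "exp (g * x) * tail M x \<le> exp (g * t)" if "x \<in> {0..t}" for x
  proof -
    have "exp (g * x) * tail M x \<le> exp (g * x)"
      using tail_le_1 by (simp add: mult_left_le)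
    also have "\<dots> \<le> exp (g * t)"
      using that assms by (simp add: mult_left_mono)
    finally show ?thesis .
  qed
  show "(\<lambda>x. exp (g * x) * tail M x) integrable_on {0..t}"
    by (rule integrable_on_Icc_if_bounded[where B="exp (g * t)"]) (auto simp: tail_nonneg bounded)
  have "(\<integral>\<^sup>+x. indicator {..t} x * (ennreal (exp (g * x)) * etail M x) \<partial>lborel)
      = (\<integral>\<^sup>+x. ennreal (indicator {0..t} x * (exp (g * x) * tail M x)) \<partial>lborel)"
    by (intro nn_integral_cong) (auto simp: etail_def ennreal_mult tail_nonneg split: split_indicator)
  also have "\<dots> = ennreal (weighted_tail_integral M g t)"
    unfolding weighted_tail_integral_def
    by (rule nn_integral_Icc_eq_integral[where B="exp (g * t)"]) (auto simp: tail_nonneg bounded)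
  finally show "(\<integral>\<^sup>+x. indicator {..t} x * (ennreal (exp (g * x)) * etail M x) \<partial>lborel)
      = ennreal (weighted_tail_integral M g t)" .
qed

lemma nn_integral_etail_atMost:
  "(\<integral>\<^sup>+x. indicator {..t} x * etail M x \<partial>lborel) = ennreal (weighted_tail_integral M 0 t)"
  using nn_integral_exp_etail_atMost[of 0 t] by simp

lemma weighted_tail_integral_nonneg: "0 \<le> g \<Longrightarrow> 0 \<le> weighted_tail_integral M g t"
  unfolding weighted_tail_integral_def
  by (intro integral_nonneg weighted_tail_integrable) (auto simp: tail_nonneg)

lemma weighted_tail_integral_le_exp_mult:
  assumes "0 \<le> g"
  shows "weighted_tail_integral M g t \<le> exp (g * t) * weighted_tail_integral M 0 t"
proof -
  have "exp (g * x) * tail M x \<le> exp (g * t) * (exp (0 * x) * tail M x)" if "x \<in> {0..t}" for x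
    using that assms by (auto intro!: mult_right_mono mult_left_mono simp: tail_nonneg)
  then have "integral {0..t} (\<lambda>x. exp (g * x) * tail M x)
      \<le> integral {0..t} (\<lambda>x. exp (g * t) * (exp (0 * x) * tail M x))"
    using assms by (intro integral_le integrable_on_mult_right weighted_tail_integrable) auto
  then show ?thesis
    by (simp add: weighted_tail_integral_def)
qed

lemma weighted_tail_integral_attains:
  assumes "heavy_tailed M" "0 < g" "0 \<le> x0" "weighted_tail_integral M g x0 \<le> v"
  shows "\<exists>t\<ge>x0. weighted_tail_integral M g t = v"
proof -
  have "0 \<le> v"
    using assms(2,4) weighted_tail_integral_nonneg[of g x0] by simp
  have "((\<lambda>t. ennreal (weighted_tail_integral M g t)) \<longlongrightarrow> \<infinity>) at_top"
    using tendsto_nn_integral_indicator_atMost[of "\<lambda>x. ennreal (exp (g * x)) * etail M x"]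
      nn_integral_exp_etail_eq_infinity[OF assms(1,2)] assms(2)
    by (simp add: nn_integral_exp_etail_atMost)
  then have "\<forall>\<^sub>F t in at_top. ennreal v < ennreal (weighted_tail_integral M g t)"
    by (rule order_tendstoD(1)) simp
  then obtain N where N: "\<And>t. N \<le> t \<Longrightarrow> v < weighted_tail_integral M g t"
    using \<open>0 \<le> v\<close> by (auto simp: eventually_at_top_linorder ennreal_less_iff)
  define T where "T = max N x0"
  have "continuous_on {0..T} (weighted_tail_integral M g)"
    using indefinite_integral_continuous_1[OF weighted_tail_integrable[of g T]] assms(2)
    by (simp add: weighted_tail_integral_def[abs_def])
  then have "continuous_on {x0..T} (weighted_tail_integral M g)"
    by (rule continuous_on_subset) (use assms(3) in auto)
  moreover have "v \<le> weighted_tail_integral M g T"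
    using N[of T] by (simp add: T_def)
  ultimately show ?thesis
    using IVT'[of "weighted_tail_integral M g" x0 v T] assms(4) by (auto simp: T_def)
qed

lemma weighted_tail_integral_0_less:
  assumes pos: "\<And>x. 0 < tail M x"
    and mean: "(\<integral>\<^sup>+x. etail M x \<partial>lborel) = ennreal a" and "0 \<le> a"
  shows "weighted_tail_integral M 0 x < a"
proof -
  define m where "m = max x 0"
  have "(\<integral>\<^sup>+y. indicator {..x} y * etail M y + ennreal (tail M (m + 1)) * indicator {m<..m + 1} y \<partial>lborel)
      \<le> (\<integral>\<^sup>+y. etail M y \<partial>lborel)"
  proof (rule nn_integral_mono)
    fix y
    show "indicator {..x} y * etail M y + ennreal (tail M (m + 1)) * indicator {m<..m + 1} y \<le> etail M y"
    proof (cases "m < y \<and> y \<le> m + 1")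
      case True
      then show ?thesis
        using tail_antimono[of y "m + 1"] by (auto simp: m_def etail_def ennreal_leI)
    qed (auto simp: m_def split: split_indicator)
  qed
  then have "ennreal (weighted_tail_integral M 0 x) + ennreal (tail M (m + 1)) \<le> ennreal a"
    by (subst (asm) nn_integral_add) (auto simp: nn_integral_cmult_indicator nn_integral_etail_atMost mean)
  then have "weighted_tail_integral M 0 x + tail M (m + 1) \<le> a"
    using \<open>0 \<le> a\<close> weighted_tail_integral_nonneg[of 0 x] tail_nonneg[of M "m + 1"]
    by (simp add: ennreal_plus[symmetric] del: ennreal_plus)
  then show ?thesis
    using pos[of "m + 1"] by simp
qed

lemma weighted_tail_integral_0_tendsto:
  assumes "(\<integral>\<^sup>+x. etail M x \<partial>lborel) = ennreal a" "0 \<le> a"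
  shows "(weighted_tail_integral M 0 \<longlongrightarrow> a) at_top"
proof (rule tendsto_ennrealD)
  show "((\<lambda>t. ennreal (weighted_tail_integral M 0 t)) \<longlongrightarrow> ennreal a) at_top"
    using tendsto_nn_integral_indicator_atMost[of "etail M"] assms(1)
    by (simp add: nn_integral_etail_atMost)
qed (simp_all add: weighted_tail_integral_nonneg assms(2))

lemma eventually_tail_conv_bounds:
  assumes "tail_conv M \<sim>[at_top] (\<lambda>x. c * tail M x)" "0 < c" "0 < e"
  shows "\<forall>\<^sub>F x in at_top. (c - e) * tail M x \<le> tail_conv M x \<and> tail_conv M x \<le> (c + e) * tail M x"
proof -
  have "\<forall>\<^sub>F x in at_top. norm (tail_conv M x) \<le> (1 + e / c) * norm (c * tail M x)"
    by (rule asymp_equiv_imp_eventually_le) (use assms in auto)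
  moreover have "\<forall>\<^sub>F x in at_top. (1 - e / c) * norm (c * tail M x) \<le> norm (tail_conv M x)"
    by (rule asymp_equiv_imp_eventually_ge) (use assms in auto)
  ultimately show ?thesis
  proof eventually_elim
    case (elim x)
    have "norm (tail_conv M x) = tail_conv M x"
      using tail_conv_nonneg[of x] by simp
    moreover have "(1 + e / c) * norm (c * tail M x) = (c + e) * tail M x"
      and "(1 - e / c) * norm (c * tail M x) = (c - e) * tail M x"
      using assms(2) tail_nonneg[of M x] by (simp_all add: abs_mult field_simps)
    ultimately show ?case
      using elim by simp
  qed
qed

lemma nn_integral_etail_finite:
  assumes pos: "\<And>x. 0 < tail M x" and "0 < c"
    and equiv: "tail_conv M \<sim>[at_top] (\<lambda>x. c * tail M x)"
  shows "(\<integral>\<^sup>+x. etail M x \<partial>lborel) < \<infinity>"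
proof -
  have "\<forall>\<^sub>F x in at_top. (\<integral>\<^sup>+y. indicator {..x} y * etail M y \<partial>lborel) \<le> ennreal (c + 1)"
    using eventually_tail_conv_bounds[OF equiv \<open>0 < c\<close> zero_less_one]
  proof eventually_elim
    case (elim x)
    have "ennreal (tail M x) * (\<integral>\<^sup>+y. indicator {..x} y * etail M y \<partial>lborel) \<le> ennreal (tail_conv M x)"
      by (rule tail_mult_nn_integral_etail_le_tail_conv)
    also have "\<dots> \<le> ennreal ((c + 1) * tail M x)"
      using elim by (intro ennreal_leI) simp
    also have "\<dots> = ennreal (tail M x) * ennreal (c + 1)"
      using \<open>0 < c\<close> by (subst ennreal_mult) (auto simp: tail_nonneg mult.commute)
    finally show ?case
      using pos[of x] by (simp add: ennreal_mult_le_mult_iff)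
  qed
  then have "(\<integral>\<^sup>+x. etail M x \<partial>lborel) \<le> ennreal (c + 1)"
    by (rule tendsto_upperbound[OF tendsto_nn_integral_indicator_atMost[OF borel_measurable_etail]])
       simp
  then show ?thesis
    using ennreal_less_top[of "c + 1"] unfolding infinity_ennreal_def by (rule le_less_trans)
qed

lemma quadratic_lower_bound_of_weighted:
  assumes heavy: "heavy_tailed M" and "0 \<le> x0" "0 \<le> C"
    and bound: "\<And>g t. 0 < g \<Longrightarrow> x0 \<le> t \<Longrightarrow>
      k + C * weighted_tail_integral M g t
        \<le> (weighted_tail_integral M g t)\<^sup>2 + C * weighted_tail_integral M g x0"
    and v: "weighted_tail_integral M 0 x0 < v"
  shows "k + C * v \<le> v\<^sup>2 + C * weighted_tail_integral M 0 x0"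
proof -
  define p where "p = weighted_tail_integral M 0 x0"
  have weighted: "k + C * v \<le> v\<^sup>2 + C * (exp (g * x0) * p)" if "0 < g" "exp (g * x0) * p < v" for g
  proof -
    have le: "weighted_tail_integral M g x0 \<le> exp (g * x0) * p"
      using weighted_tail_integral_le_exp_mult[of g x0] that by (simp add: p_def)
    then have "weighted_tail_integral M g x0 \<le> v"
      using that(2) by linarith
    then obtain t where "x0 \<le> t" "weighted_tail_integral M g t = v"
      using weighted_tail_integral_attains[OF heavy \<open>0 < g\<close> \<open>0 \<le> x0\<close>] by blast
    then have "k + C * v \<le> v\<^sup>2 + C * weighted_tail_integral M g x0"
      using bound[OF \<open>0 < g\<close>, of t] by simp
    also have "\<dots> \<le> v\<^sup>2 + C * (exp (g * x0) * p)"
      using le \<open>0 \<le> C\<close> by (simp add: mult_left_mono)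
    finally show ?thesis .
  qed
  have lim: "((\<lambda>g. exp (g * x0) * p) \<longlongrightarrow> p) (at_right 0)"
    by (auto intro!: tendsto_eq_intros)
  have "\<forall>\<^sub>F g in at_right 0. k + C * v \<le> v\<^sup>2 + C * (exp (g * x0) * p)"
    using order_tendstoD(2)[OF lim v[folded p_def]] eventually_at_right_less[of 0]
    by eventually_elim (rule weighted)
  moreover have "((\<lambda>g. v\<^sup>2 + C * (exp (g * x0) * p)) \<longlongrightarrow> v\<^sup>2 + C * p) (at_right 0)"
    by (intro tendsto_intros lim)
  ultimately show ?thesis
    unfolding p_def[symmetric] by (intro tendsto_lowerbound) auto
qed

lemma nn_integral_atMost_nn_conv_etail_finite:
  assumes mean: "(\<integral>\<^sup>+x. etail M x \<partial>lborel) = ennreal a" and "0 \<le> a"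
  obtains k where "(\<integral>\<^sup>+x. indicator {..x0} x * nn_conv (etail M) (etail M) x \<partial>lborel) = ennreal k"
    and "0 \<le> k"
proof -
  have "(\<integral>\<^sup>+x. indicator {..x0} x * nn_conv (etail M) (etail M) x \<partial>lborel)
      \<le> (\<integral>\<^sup>+x. nn_conv (etail M) (etail M) x \<partial>lborel)"
    by (intro nn_integral_mono) (simp split: split_indicator)
  also have "\<dots> = ennreal (a\<^sup>2)"
    by (simp add: nn_integral_nn_conv mean power2_eq_square ennreal_mult \<open>0 \<le> a\<close>)
  also have "\<dots> < \<top>"
    by simp
  finally show ?thesis
    using that unfolding less_top_ennreal by blast
qed

lemma tail_conv_quadratic_upper_bound:
  assumes mean: "(\<integral>\<^sup>+x. etail M x \<partial>lborel) = ennreal a" and "0 \<le> a" and "0 \<le> x0" and "0 \<le> C"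
    and head: "(\<integral>\<^sup>+x. indicator {..x0} x * nn_conv (etail M) (etail M) x \<partial>lborel) = ennreal k"
    and "0 \<le> k"
    and upper: "\<And>x. x0 < x \<Longrightarrow> tail_conv M x \<le> C * tail M x"
  shows "a\<^sup>2 + C * weighted_tail_integral M 0 x0 \<le> k + C * a"
proof -
  have conv_upper: "nn_conv (etail M) (etail M) x \<le> ennreal C * etail M x" if "x0 < x" for x
    using upper[OF that] that \<open>0 \<le> x0\<close> \<open>0 \<le> C\<close>
    by (simp add: etail_def ennreal_tail_conv[symmetric] ennreal_mult[symmetric] tail_nonneg)
  have "(\<integral>\<^sup>+x. etail M x \<partial>lborel)\<^sup>2 + ennreal C * (\<integral>\<^sup>+x. indicator {..x0} x * etail M x \<partial>lborel)
      \<le> (\<integral>\<^sup>+x. indicator {..x0} x * nn_conv (etail M) (etail M) x \<partial>lborel)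
        + ennreal C * (\<integral>\<^sup>+x. etail M x \<partial>lborel)"
    by (rule nn_integral_square_le_of_nn_conv_le) (simp_all add: conv_upper)
  then have "ennreal (a\<^sup>2 + C * weighted_tail_integral M 0 x0) \<le> ennreal (k + C * a)"
    using \<open>0 \<le> a\<close> \<open>0 \<le> k\<close> \<open>0 \<le> C\<close> weighted_tail_integral_nonneg[of 0 x0]
    by (simp add: mean head nn_integral_etail_atMost ennreal_mult ennreal_power[symmetric])
  then show ?thesis
    using \<open>0 \<le> a\<close> \<open>0 \<le> k\<close> \<open>0 \<le> C\<close> by (subst (asm) ennreal_le_iff) simp_all
qed

lemma tail_conv_quadratic_lower_bound:
  assumes heavy: "heavy_tailed M" and "0 \<le> x0" and "0 < C"
    and head: "(\<integral>\<^sup>+x. indicator {..x0} x * nn_conv (etail M) (etail M) x \<partial>lborel) = ennreal k"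
    and "0 \<le> k"
    and lower: "\<And>x. x0 < x \<Longrightarrow> C * tail M x \<le> tail_conv M x"
    and "weighted_tail_integral M 0 x0 < v"
  shows "k + C * v \<le> v\<^sup>2 + C * weighted_tail_integral M 0 x0"
proof (rule quadratic_lower_bound_of_weighted[OF heavy \<open>0 \<le> x0\<close> _ _ \<open>weighted_tail_integral M 0 x0 < v\<close>])
  have conv_lower: "ennreal C * etail M x \<le> nn_conv (etail M) (etail M) x" if "x0 < x" for x
    using lower[OF that] that \<open>0 \<le> x0\<close> \<open>0 < C\<close> tail_conv_nonneg[of x]
    by (simp add: etail_def ennreal_tail_conv[symmetric] ennreal_mult[symmetric] tail_nonneg)
  fix g t :: real
  assume "0 < g" "x0 \<le> t"
  have nonneg: "0 \<le> weighted_tail_integral M g t" "0 \<le> weighted_tail_integral M g x0"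
    using \<open>0 < g\<close> by (simp_all add: weighted_tail_integral_nonneg)
  have "(\<integral>\<^sup>+x. indicator {..x0} x * nn_conv (etail M) (etail M) x \<partial>lborel)
      + ennreal C * (\<integral>\<^sup>+x. indicator {..t} x * (ennreal (exp (g * x)) * etail M x) \<partial>lborel)
      \<le> (\<integral>\<^sup>+x. indicator {..t} x * (ennreal (exp (g * x)) * etail M x) \<partial>lborel)\<^sup>2
        + ennreal C * (\<integral>\<^sup>+x. indicator {..x0} x * (ennreal (exp (g * x)) * etail M x) \<partial>lborel)"
    using \<open>0 < g\<close> \<open>x0 \<le> t\<close>
    by (intro nn_integral_exp_weighted_le_of_le_nn_conv) (simp_all add: conv_lower, simp add: etail_def)
  then have "ennreal (k + C * weighted_tail_integral M g t)
      \<le> ennreal ((weighted_tail_integral M g t)\<^sup>2 + C * weighted_tail_integral M g x0)"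
    using \<open>0 < g\<close> nonneg \<open>0 \<le> k\<close> \<open>0 < C\<close>
    by (simp add: head nn_integral_exp_etail_atMost ennreal_mult ennreal_power[symmetric])
  then show "k + C * weighted_tail_integral M g t
      \<le> (weighted_tail_integral M g t)\<^sup>2 + C * weighted_tail_integral M g x0"
    using nonneg \<open>0 < C\<close> by (subst (asm) ennreal_le_iff) simp_all
qed (use \<open>0 < C\<close> in simp)

lemma abs_conv_constant_diff_twice_mean_le:
  assumes pos: "\<And>x. 0 < tail M x" and heavy: "heavy_tailed M"
    and equiv: "tail_conv M \<sim>[at_top] (\<lambda>x. c * tail M x)"
    and mean: "(\<integral>\<^sup>+x. etail M x \<partial>lborel) = ennreal a" and "0 \<le> a"
    and "0 < e" "e < c"
  shows "\<bar>c - 2 * a\<bar> \<le> 3 * e"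
proof -
  obtain X where X: "\<And>x. X \<le> x \<Longrightarrow> (c - e) * tail M x \<le> tail_conv M x \<and> tail_conv M x \<le> (c + e) * tail M x"
    using eventually_tail_conv_bounds[OF equiv _ \<open>0 < e\<close>] \<open>0 < e\<close> \<open>e < c\<close>
    by (auto simp: eventually_at_top_linorder)
  have "\<bar>c - 2 * a\<bar> \<le> 3 * e + (a - weighted_tail_integral M 0 x0)" if "max X 0 \<le> x0" for x0
  proof -
    obtain k where head: "(\<integral>\<^sup>+x. indicator {..x0} x * nn_conv (etail M) (etail M) x \<partial>lborel) = ennreal k"
      and "0 \<le> k"
      using nn_integral_atMost_nn_conv_etail_finite[OF mean \<open>0 \<le> a\<close>] .
    have "0 \<le> x0"
      using that by simp
    have "a\<^sup>2 + (c + e) * weighted_tail_integral M 0 x0 \<le> k + (c + e) * a"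
      by (rule tail_conv_quadratic_upper_bound[OF mean \<open>0 \<le> a\<close> \<open>0 \<le> x0\<close> _ head \<open>0 \<le> k\<close>])
         (use X that \<open>0 < e\<close> \<open>e < c\<close> in auto)
    moreover have "k + (c - e) * v \<le> v\<^sup>2 + (c - e) * weighted_tail_integral M 0 x0"
      if "weighted_tail_integral M 0 x0 < v" for v
      by (rule tail_conv_quadratic_lower_bound[OF heavy \<open>0 \<le> x0\<close> _ head \<open>0 \<le> k\<close> _ that])
         (use X \<open>max X 0 \<le> x0\<close> \<open>e < c\<close> in auto)
    ultimately show ?thesis
      using abs_diff_le_of_quadratic_bounds weighted_tail_integral_0_less[OF pos mean \<open>0 \<le> a\<close>]
      by blast
  qed
  then have "\<forall>\<^sub>F x0 in at_top. \<bar>c - 2 * a\<bar> \<le> 3 * e + (a - weighted_tail_integral M 0 x0)"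
    unfolding eventually_at_top_linorder by blast
  moreover have "((\<lambda>x0. 3 * e + (a - weighted_tail_integral M 0 x0)) \<longlongrightarrow> 3 * e) at_top"
    using weighted_tail_integral_0_tendsto[OF mean \<open>0 \<le> a\<close>] by (auto intro!: tendsto_eq_intros)
  ultimately show ?thesis
    by (intro tendsto_lowerbound) auto
qed

lemma conv_constant_eq_twice_mean:
  assumes pos: "\<And>x. 0 < tail M x" and heavy: "heavy_tailed M" and "0 < c"
    and equiv: "tail_conv M \<sim>[at_top] (\<lambda>x. c * tail M x)"
    and mean: "(\<integral>\<^sup>+x. etail M x \<partial>lborel) = ennreal a" and "0 \<le> a"
  shows "c = 2 * a"
proof -
  have "\<forall>\<^sub>F e in at_right 0. \<bar>c - 2 * a\<bar> \<le> 3 * e"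
    using abs_conv_constant_diff_twice_mean_le[OF pos heavy equiv mean \<open>0 \<le> a\<close>] \<open>0 < c\<close>
    unfolding eventually_at_right_field by blast
  moreover have "((\<lambda>e. 3 * e) \<longlongrightarrow> (0::real)) (at_right 0)"
    by (auto intro!: tendsto_eq_intros)
  ultimately have "\<bar>c - 2 * a\<bar> \<le> 0"
    by (intro tendsto_lowerbound) auto
  then show ?thesis
    by simp
qed

end

theorem theorem5:
  fixes M :: "real measure" and c :: real
  assumes "distribution_on_nonneg M"
    and "\<And>x. tail M x > 0"
    and "heavy_tailed M"
    and "0 < c"
    and "tail_conv M \<sim>[at_top] (\<lambda>x. c * tail M x)"
  shows "integrable M (\<lambda>x. x) \<and>
         tail_conv M \<sim>[at_top] (\<lambda>x. 2 * (\<integral>y. y \<partial>M) * tail M x)"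
proof -
  obtain a where mean: "(\<integral>\<^sup>+x. etail M x \<partial>lborel) = ennreal a" and "0 \<le> a"
    using nn_integral_etail_finite[OF assms(1,2,4,5)] by (auto simp: less_top_ennreal)
  have "has_bochner_integral M (\<lambda>x. x) a"
    by (rule has_bochner_integral_id[OF assms(1) mean \<open>0 \<le> a\<close>])
  moreover have "c = 2 * a"
    by (rule conv_constant_eq_twice_mean[OF assms mean \<open>0 \<le> a\<close>])
  ultimately show ?thesis
    using assms(5) by (simp add: has_bochner_integral_iff)
qed

end
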